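(* Let $n\ge1$ have canonical prime factorization $n=p_1^{\alpha_1}p_2^{\alpha_2}\cdots p_r^{\alpha_r}$, and let $d_1,\dots,d_{\tau(n)}$ be the positive divisors of $n$ (listed in any order). Then $$\det\Big[c_{d_i}\Big(\frac{n}{d_j}\Big)\Big]_{i,j=1}^{\tau(n)} = n^{\tau(n)/2}\,(-1)^{\sum_{i=1}^r \lfloor\frac{\alpha_i+1}{2}\rfloor\frac{\tau(n)}{\alpha_i+1}}.$$
   Context: For integers $m\ge1$ and $x$, the Ramanujan sum is $c_m(x)=\sum_{1\le j\le m,\ (j,m)=1} e^{2\pi i jx/m}$. $\tau(n)$ denotes the number of positive divisors of $n$. *)

theory Defs
  imports Complex_Main "HOL-Computational_Algebra.Primes" "Jordan_Normal_Form.Determinant"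
begin

definition ramanujan_sum :: "nat \<Rightarrow> int \<Rightarrow> complex" where
  "ramanujan_sum m x =
     (\<Sum>j\<in>{j\<in>{1..m}. coprime j m}. exp (2 * of_real pi * \<i> * of_nat j * of_int x / of_nat m))"

definition num_divisors :: "nat \<Rightarrow> nat" where
  "num_divisors n = card {d. d dvd n}"

end

theory Submission
  imports Defs
begin

(*
  Let Z = [d_j | d_i] be the divisibility matrix of the divisors. Since the Ramanujan sums
  satisfy sum_(e | d) c_e(x) = d [d | x], the product of Z with the Ramanujan matrix is
  G = [d_i [d_i d_j | n]]. Weighting each index by its divisor, Z is unitriangular, so
  det Z = 1, and the only permutation with a nonzero term in det G is the involution
  d |-> n/d. It has at most one fixed point, so its sign is (-1)^floor(tau(n)/2), and
  det G = (-1)^floor(tau(n)/2) prod_(d | n) d = (-1)^floor(tau(n)/2) n^(tau(n)/2).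
  Finally tau(n) = prod_i (alpha_i + 1), and the parity of floor(tau(n)/2) is computed
  by induction over the prime factors.
*)

lemma div_dvd_self_nat: "(d::nat) dvd n \<Longrightarrow> n div d dvd n"
  by (metis dvd_mult_div_cancel dvd_triv_right)

lemma sum_exp_roots_of_unity:
  fixes k :: nat and x :: int
  assumes "k > 0"
  shows "(\<Sum>j\<in>{1..k}. exp (2 * of_real pi * \<i> * of_nat j * of_int x / of_nat k))
         = (if int k dvd x then of_nat k else 0)"
proof -
  define \<theta> where "\<theta> = 2 * pi * real_of_int x / real k"
  define z where "z = cis \<theta>"
  have exp_eq: "exp (2 * of_real pi * \<i> * of_nat j * of_int x / of_nat k) = z ^ j" for j
  proof -
    have "2 * of_real pi * \<i> * of_nat j * of_int x / of_nat k = \<i> * complex_of_real (real j * \<theta>)"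
      unfolding \<theta>_def by (simp add: field_simps)
    then show ?thesis unfolding z_def DeMoivre by (simp add: cis_conv_exp)
  qed
  show ?thesis
  proof (cases "int k dvd x")
    case True
    then obtain q where "x = int k * q" by blast
    then have "\<theta> = 2 * pi * real_of_int q" unfolding \<theta>_def using assms by simp
    then have "z = 1" unfolding z_def by (simp add: cis.ctr complex_eq_iff)
    then show ?thesis using True by (simp add: exp_eq)
  next
    case False
    have "z \<noteq> 1"
    proof
      assume "z = 1"
      then have "cos \<theta> = 1" unfolding z_def by (simp add: complex_eq_iff)
      then obtain m :: int where "\<theta> = real_of_int m * 2 * pi" by (auto simp: cos_one_2pi_int)
      then have "real_of_int x = real_of_int (m * int k)" unfolding \<theta>_def using assms
        by (simp add: field_simps)
      then show False using False by (simp only: of_int_eq_iff) simp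
    qed
    have "z ^ k = cis (2 * pi * real_of_int x)"
      unfolding z_def DeMoivre \<theta>_def using assms by simp
    also have "\<dots> = 1" by (simp add: cis.ctr complex_eq_iff)
    finally have "z ^ k = 1" .
    have "(\<Sum>j\<in>{1..k}. z ^ j) = z * (\<Sum>j<k. z ^ j)"
      by (simp add: sum.atLeast1_atMost_eq sum_distrib_left)
    also have "\<dots> = 0" using \<open>z \<noteq> 1\<close> \<open>z ^ k = 1\<close> by (simp add: geometric_sum)
    finally show ?thesis using False by (simp add: exp_eq)
  qed
qed

(* The j \<le> k with gcd j k = k/d are exactly the c * (k/d) with c \<le> d coprime to d. *)
lemma sum_exp_gcd_class_eq_ramanujan_sum:
  fixes k d :: nat and x :: int
  assumes "k > 0" and "d dvd k"
  shows "(\<Sum>j\<in>{j\<in>{1..k}. k div gcd j k = d}. exp (2 * of_real pi * \<i> * of_nat j * of_int x / of_nat k))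
         = ramanujan_sum d x"
proof -
  obtain e where k: "k = d * e" using assms(2) by blast
  have "d > 0" "e > 0" using assms(1) k by auto
  have gcd_mult_e: "gcd (c * e) k = e * gcd c d" for c
    unfolding k by (metis gcd_mult_distrib_nat mult.commute)
  show ?thesis
    unfolding ramanujan_sum_def
  proof (rule sym, rule sum.reindex_bij_witness[where j = "\<lambda>j. j * e" and i = "\<lambda>j. j div e"])
    fix c assume c: "c \<in> {c\<in>{1..d}. coprime c d}"
    show "c * e div e = c" using \<open>e > 0\<close> by simp
    have "gcd (c * e) k = e" using c by (simp add: gcd_mult_e coprime_iff_gcd_eq_1)
    then show "c * e \<in> {j\<in>{1..k}. k div gcd j k = d}"
      using c \<open>e > 0\<close> \<open>k = d * e\<close> by simp
    have "2 * of_real pi * \<i> * of_nat (c * e) * of_int x / of_nat k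
        = 2 * of_real pi * \<i> * of_nat c * of_int x / (of_nat d :: complex)"
      using \<open>e > 0\<close> unfolding k by (simp add: field_simps)
    then show "exp (2 * of_real pi * \<i> * of_nat (c * e) * of_int x / of_nat k)
        = exp (2 * of_real pi * \<i> * of_nat c * of_int x / of_nat d)" by simp
  next
    fix j assume j: "j \<in> {j\<in>{1..k}. k div gcd j k = d}"
    have "gcd j k * d = d * e"
      using j dvd_mult_div_cancel[OF gcd_dvd2[of j k]] unfolding k by simp
    then have "gcd j k = e" using \<open>d > 0\<close> by simp
    then obtain c where c: "j = c * e" by (metis dvd_def gcd_dvd1 mult.commute)
    show "j div e * e = j" using c \<open>e > 0\<close> by simp
    have "gcd c d = 1" using \<open>gcd j k = e\<close> \<open>e > 0\<close> by (simp add: c gcd_mult_e)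
    moreover have "1 \<le> c" "c \<le> d" using j \<open>e > 0\<close> by (auto simp: c k)
    ultimately show "j div e \<in> {c\<in>{1..d}. coprime c d}"
      using c \<open>e > 0\<close> by (simp add: coprime_iff_gcd_eq_1)
  qed
qed

lemma sum_divisors_ramanujan_sum:
  fixes k :: nat and x :: int
  assumes "k > 0"
  shows "(\<Sum>d | d dvd k. ramanujan_sum d x) = (if int k dvd x then of_nat k else 0)"
proof -
  have "(\<Sum>d | d dvd k. ramanujan_sum d x)
      = (\<Sum>d | d dvd k. \<Sum>j\<in>{j\<in>{1..k}. k div gcd j k = d}.
           exp (2 * of_real pi * \<i> * of_nat j * of_int x / of_nat k))"
    by (rule sum.cong[OF refl], rule sum_exp_gcd_class_eq_ramanujan_sum[symmetric]) (use assms in auto)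
  also have "\<dots> = (\<Sum>j\<in>{1..k}. exp (2 * of_real pi * \<i> * of_nat j * of_int x / of_nat k))"
    by (rule sum.group) (use assms in \<open>auto intro: div_dvd_self_nat\<close>)
  finally show ?thesis using sum_exp_roots_of_unity[OF assms] by simp
qed

lemma even_half_mult_iff:
  fixes s t :: nat
  shows "even (s * t div 2) \<longleftrightarrow> even (s div 2 * t + s * (t div 2))"
proof -
  obtain a e where s: "s = 2 * a + e" "e < 2" by (metis div_mult_mod_eq mod_less_divisor pos2 mult.commute)
  obtain b f where t: "t = 2 * b + f" "f < 2" by (metis div_mult_mod_eq mod_less_divisor pos2 mult.commute)
  have "e * f < 2" using s(2) t(2) by (cases e; cases f) auto
  then have "s * t div 2 = a * t + e * b"
    unfolding s(1) t(1) by (simp add: algebra_simps)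
  moreover have "s div 2 * t + s * (t div 2) = (a * t + e * b) + 2 * (a * b)"
    using s t by (simp add: algebra_simps)
  ultimately show ?thesis by simp
qed

lemma even_sum_half_mult_prod_iff:
  fixes t :: "'i \<Rightarrow> nat"
  assumes "finite P" and "\<And>i. i \<in> P \<Longrightarrow> t i > 0"
  shows "even (\<Sum>i\<in>P. t i div 2 * (prod t P div t i)) \<longleftrightarrow> even (prod t P div 2)"
  using assms
proof (induction P rule: finite_induct)
  case (insert a P)
  define T where "T = prod t P"
  have "prod t (insert a P) div t i = t a * (T div t i)" if "i \<in> P" for i
    using insert that by (simp add: T_def div_mult_swap dvd_prodI)
  moreover have "prod t (insert a P) div t a = T" using insert by (simp add: T_def)
  ultimately have "(\<Sum>i\<in>insert a P. t i div 2 * (prod t (insert a P) div t i))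
      = t a div 2 * T + t a * (\<Sum>i\<in>P. t i div 2 * (T div t i))"
    using insert by (simp add: sum_distrib_left mult.left_commute)
  moreover have "even (\<Sum>i\<in>P. t i div 2 * (T div t i)) \<longleftrightarrow> even (T div 2)"
    using insert by (simp add: T_def)
  ultimately show ?case
    using insert even_half_mult_iff[of "t a" T] by (simp add: T_def)
qed simp

lemma bij_betw_divisors_multiplicities:
  fixes n :: nat
  assumes "n > 0"
  shows "bij_betw (\<lambda>d. restrict (\<lambda>p. multiplicity p d) (prime_factors n))
           {d. d dvd n} (\<Pi>\<^sub>E p\<in>prime_factors n. {0..multiplicity p n})"
proof (rule bij_betw_byWitness[where f' = "\<lambda>e. \<Prod>p\<in>prime_factors n. p ^ e p"])
  show "\<forall>d\<in>{d. d dvd n}. (\<Prod>p\<in>prime_factors n. p ^ restrict (\<lambda>p. multiplicity p d) (prime_factors n) p) = d"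
  proof
    fix d assume "d \<in> {d. d dvd n}"
    then have "d dvd n" "d > 0" using assms by (auto intro: Nat.gr0I)
    then have "prime_factors d \<subseteq> prime_factors n" using assms by (simp add: dvd_prime_factors)
    then have "(\<Prod>p\<in>prime_factors n. p ^ multiplicity p d) = (\<Prod>p\<in>prime_factors d. p ^ multiplicity p d)"
      using \<open>d > 0\<close> by (intro prod.mono_neutral_right finite_set_mset) (auto simp: prime_factors_multiplicity)
    also have "\<dots> = d" using prime_factorization_nat[OF \<open>d > 0\<close>] by simp
    finally show "(\<Prod>p\<in>prime_factors n. p ^ restrict (\<lambda>p. multiplicity p d) (prime_factors n) p) = d"
      by simp
  qed
  have multiplicity_prod: "multiplicity p (\<Prod>p\<in>prime_factors n. p ^ e p) = (if p \<in> prime_factors n then e p else 0)"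
    if "prime p" for p e
    by (rule multiplicity_prod_prime_powers) (auto simp: that in_prime_factors_imp_prime)
  show "\<forall>e\<in>\<Pi>\<^sub>E p\<in>prime_factors n. {0..multiplicity p n}.
          restrict (\<lambda>p. multiplicity p (\<Prod>p\<in>prime_factors n. p ^ e p)) (prime_factors n) = e"
  proof (intro ballI ext)
    fix e p assume "e \<in> (\<Pi>\<^sub>E p\<in>prime_factors n. {0..multiplicity p n})"
    then show "restrict (\<lambda>p. multiplicity p (\<Prod>p\<in>prime_factors n. p ^ e p)) (prime_factors n) p = e p"
      using multiplicity_prod[OF in_prime_factors_imp_prime, of p n e]
      by (cases "p \<in> prime_factors n") (auto simp: PiE_def extensional_def)
  qed
  show "(\<lambda>d. restrict (\<lambda>p. multiplicity p d) (prime_factors n)) ` {d. d dvd n}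
        \<subseteq> (\<Pi>\<^sub>E p\<in>prime_factors n. {0..multiplicity p n})"
    using assms by (auto intro: dvd_imp_multiplicity_le)
  have "(\<Prod>p\<in>prime_factors n. p ^ e p) dvd n" if "e \<in> (\<Pi>\<^sub>E p\<in>prime_factors n. {0..multiplicity p n})" for e
  proof (rule multiplicity_le_imp_dvd)
    show "(\<Prod>p\<in>prime_factors n. p ^ e p) \<noteq> 0" by (auto simp: prime_gt_0_nat)
    show "multiplicity p (\<Prod>p\<in>prime_factors n. p ^ e p) \<le> multiplicity p n" if "prime p" for p
      using \<open>e \<in> _\<close> that by (auto simp: multiplicity_prod)
  qed
  then show "(\<lambda>e. \<Prod>p\<in>prime_factors n. p ^ e p) ` (\<Pi>\<^sub>E p\<in>prime_factors n. {0..multiplicity p n})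
        \<subseteq> {d. d dvd n}" by auto
qed

lemma num_divisors_eq_prod_multiplicity:
  fixes n :: nat
  assumes "n > 0"
  shows "num_divisors n = (\<Prod>p\<in>prime_factors n. multiplicity p n + 1)"
  unfolding num_divisors_def bij_betw_same_card[OF bij_betw_divisors_multiplicities[OF assms]]
  by (simp add: card_PiE)

lemma minus_one_power_half_num_divisors:
  fixes n :: nat
  assumes "n > 0"
  shows "(-1 :: 'a::ring_1) ^ (num_divisors n div 2)
       = (-1) ^ (\<Sum>p\<in>prime_factors n. (multiplicity p n + 1) div 2 * (num_divisors n div (multiplicity p n + 1)))"
  using even_sum_half_mult_prod_iff[of "prime_factors n" "\<lambda>p. multiplicity p n + 1"]
  by (simp add: num_divisors_eq_prod_multiplicity[OF assms] minus_one_power_iff)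

lemma bij_betw_complementary_divisor:
  fixes n :: nat
  assumes "n > 0"
  shows "bij_betw (\<lambda>d. n div d) {d. d dvd n} {d. d dvd n}"
  by (rule bij_betw_byWitness[where f' = "\<lambda>d. n div d"])
    (use assms in \<open>auto simp: div_div_eq_right dvd_div_iff_mult intro: div_dvd_self_nat\<close>)

lemma prod_divisors_eq_sqrt_power:
  fixes n :: nat
  assumes "n > 0"
  shows "real (\<Prod>d | d dvd n. d) = sqrt (real n) ^ num_divisors n"
proof -
  have "(\<Prod>d | d dvd n. d) ^ 2 = (\<Prod>d | d dvd n. d) * (\<Prod>d | d dvd n. n div d)"
    using prod.reindex_bij_betw[OF bij_betw_complementary_divisor[OF assms], of "\<lambda>d. d"]
    by (simp add: power2_eq_square)
  also have "\<dots> = (\<Prod>d | d dvd n. n)" by (simp flip: prod.distrib)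
  also have "\<dots> = n ^ num_divisors n" by (simp add: num_divisors_def)
  moreover have "(sqrt (real n) ^ num_divisors n) ^ 2 = real n ^ num_divisors n"
    by (metis power_mult mult.commute real_sqrt_pow2 of_nat_0_le_iff)
  ultimately have "real (\<Prod>d | d dvd n. d) ^ 2 = (sqrt (real n) ^ num_divisors n) ^ 2"
    by (metis of_nat_power)
  then show ?thesis
    by (metis power2_eq_iff_nonneg of_nat_0_le_iff real_sqrt_ge_zero zero_le_power)
qed

lemma sign_involution:
  assumes "finite S" and "p permutes S" and "\<And>x. p (p x) = x"
  shows "even (card {x. p x \<noteq> x}) \<and> sign p = (-1) ^ (card {x. p x \<noteq> x} div 2)"
  using assms
proof (induction "card {x. p x \<noteq> x}" arbitrary: p rule: less_induct)
  case less
  define F where "F = {x. p x \<noteq> x}"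
  have "F \<subseteq> S" unfolding F_def using less.prems(2) by (auto simp: permutes_def)
  then have "finite F" using less.prems(1) finite_subset by blast
  show ?case
  proof (cases "F = {}")
    case True
    then have "p = id" unfolding F_def by auto
    then show ?thesis using True F_def by simp
  next
    case False
    then obtain x where "x \<in> F" by blast
    define y where "y = p x"
    have "y \<noteq> x" "p y = x" using \<open>x \<in> F\<close> less.prems(3) unfolding F_def y_def by auto
    then have "y \<in> F" unfolding F_def by simp
    define q where "q = transpose x y \<circ> p"
    have "q permutes S"
      unfolding q_def using \<open>x \<in> F\<close> \<open>y \<in> F\<close> \<open>F \<subseteq> S\<close>
      by (intro permutes_compose[OF less.prems(2)] permutes_swap_id) auto
    have p_outside: "p z \<noteq> x \<and> p z \<noteq> y" if "z \<noteq> x" "z \<noteq> y" for z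
      using that less.prems(3)[of z] \<open>p y = x\<close> y_def by metis
    then have q: "q z = (if z = x \<or> z = y then z else p z)" for z
      using \<open>p y = x\<close> unfolding q_def y_def by (auto simp: transpose_def)
    have "q (q z) = z" for z
      using q[of z] q[of "p z"] p_outside[of z] less.prems(3)[of z] by (auto split: if_splits)
    have moved_q: "{z. q z \<noteq> z} = F - {x, y}" unfolding F_def using q by auto
    have "card {x, y} \<le> card F" using \<open>finite F\<close> \<open>x \<in> F\<close> \<open>y \<in> F\<close> by (intro card_mono) auto
    then have card_F: "card F = card {z. q z \<noteq> z} + 2"
      using \<open>finite F\<close> \<open>x \<in> F\<close> \<open>y \<in> F\<close> \<open>y \<noteq> x\<close> by (simp add: moved_q card_Diff_subset)
    have IH: "even (card {z. q z \<noteq> z}) \<and> sign q = (-1) ^ (card {z. q z \<noteq> z} div 2)"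
      using card_F less.prems(1) \<open>q permutes S\<close> \<open>\<And>z. q (q z) = z\<close>
      by (intro less.hyps) (auto simp: F_def)
    have "p = transpose x y \<circ> q" unfolding q_def by (simp add: comp_assoc[symmetric])
    then have "sign p = sign (transpose x y) * sign q"
      by (metis sign_compose permutation_permutes permutation_swap_id less.prems(1) \<open>q permutes S\<close>)
    then have "sign p = - sign q" using \<open>y \<noteq> x\<close> by (simp add: sign_swap_id)
    then show ?thesis using IH card_F unfolding F_def[symmetric] by (auto elim!: evenE)
  qed
qed

lemma sign_involution_card_fixpoints_le_1:
  assumes "finite S" and "p permutes S" and "\<And>x. p (p x) = x"
    and "card {x\<in>S. p x = x} \<le> 1"
  shows "sign p = (-1) ^ (card S div 2)"
proof -
  have moved: "{x. p x \<noteq> x} = {x\<in>S. p x \<noteq> x}"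
    using assms(2) by (auto simp: permutes_def)
  have "card {x\<in>S. p x \<noteq> x} + card {x\<in>S. p x = x} = card S"
    using assms(1) by (subst card_Un_disjoint[symmetric]) (auto intro: arg_cong[where f = card])
  moreover have "even (card {x\<in>S. p x \<noteq> x})"
    using sign_involution[OF assms(1-3)] unfolding moved by simp
  ultimately have "card {x. p x \<noteq> x} div 2 = card S div 2"
    using assms(4) unfolding moved by presburger
  then show ?thesis using sign_involution[OF assms(1-3)] by simp
qed

(* Any permutation p with all entries A(i, p i) nonzero has w (p i) \<le> w (\<sigma> i) for all i and
   the same total weight as \<sigma>, hence p = \<sigma>: only the \<sigma>-term survives in the Leibniz formula. *)
lemma det_eq_single_permutation_term:
  fixes A :: "'a::comm_ring_1 mat" and w :: "nat \<Rightarrow> 'b::ordered_cancel_comm_monoid_add"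
  assumes A: "A \<in> carrier_mat n n" and \<sigma>: "\<sigma> permutes {0..<n}" and w: "inj_on w {0..<n}"
    and supp: "\<And>i j. i < n \<Longrightarrow> j < n \<Longrightarrow> A $$ (i, j) \<noteq> 0 \<Longrightarrow> w j \<le> w (\<sigma> i)"
  shows "det A = signof \<sigma> * (\<Prod>i=0..<n. A $$ (i, \<sigma> i))"
proof -
  let ?term = "\<lambda>p. signof p * (\<Prod>i=0..<n. A $$ (i, p i)) :: 'a"
  have "p = \<sigma>" if p: "p permutes {0..<n}" and nonzero: "?term p \<noteq> 0" for p
  proof
    have le: "w (p i) \<le> w (\<sigma> i)" if "i \<in> {0..<n}" for i
    proof (rule supp)
      show "A $$ (i, p i) \<noteq> 0"
      proof
        assume "A $$ (i, p i) = 0"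
        then have "(\<Prod>i=0..<n. A $$ (i, p i)) = 0" using that by (intro prod_zero) auto
        then show False using nonzero by simp
      qed
    qed (use that permutes_in_image[OF p] in auto)
    have "sum (w \<circ> p) {0..<n} = sum (w \<circ> \<sigma>) {0..<n}"
      using sum.permute[OF p, of w] sum.permute[OF \<sigma>, of w] by simp
    then have same_weight: "w (p i) = w (\<sigma> i)" if "i \<in> {0..<n}" for i
      using sum_mono_inv[of "w \<circ> p" "{0..<n}" "w \<circ> \<sigma>"] le that by auto
    fix i
    show "p i = \<sigma> i"
    proof (cases "i \<in> {0..<n}")
      case True
      then show ?thesis
        using same_weight inj_onD[OF w] permutes_in_image[OF p] permutes_in_image[OF \<sigma>] by simp
    qed (simp add: permutes_not_in[OF p] permutes_not_in[OF \<sigma>])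
  qed
  then have "?term p = 0" if "p \<in> {p. p permutes {0..<n}} - {\<sigma>}" for p
    using that by blast
  then have "det A = (\<Sum>p\<in>{\<sigma>}. ?term p)"
    unfolding det_def'[OF A] using \<sigma> by (intro sum.mono_neutral_right) (simp_all add: finite_permutations)
  then show ?thesis by simp
qed

locale divisor_enumeration =
  fixes n :: nat and ds :: "nat list"
  assumes n_pos: "n > 0" and distinct_ds: "distinct ds" and set_ds: "set ds = {d. d dvd n}"
begin

lemma length_ds_eq_num_divisors: "length ds = num_divisors n"
  unfolding num_divisors_def using distinct_card[OF distinct_ds] set_ds by simp

lemma bij_betw_nth_divisors: "bij_betw ((!) ds) {0..<length ds} {d. d dvd n}"
  by (rule bij_betw_nth) (simp_all add: distinct_ds set_ds atLeast0LessThan)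

lemma nth_dvd: "i < length ds \<Longrightarrow> ds ! i dvd n"
  using set_ds nth_mem by blast

lemma nth_pos: "i < length ds \<Longrightarrow> ds ! i > 0"
  using nth_dvd[of i] n_pos by (cases "ds ! i") auto

definition compl_index :: "nat \<Rightarrow> nat" where
  "compl_index i =
     (if i < length ds then inv_into {0..<length ds} ((!) ds) (n div ds ! i) else i)"

lemma
  assumes "i < length ds"
  shows compl_index_less: "compl_index i < length ds"
    and nth_compl_index: "ds ! compl_index i = n div ds ! i"
proof -
  have d: "n div ds ! i \<in> {d. d dvd n}" using nth_dvd[OF assms] by (simp add: div_dvd_self_nat)
  show "compl_index i < length ds"
    using bij_betw_apply[OF bij_betw_inv_into[OF bij_betw_nth_divisors] d] assms
    by (simp add: compl_index_def)
  show "ds ! compl_index i = n div ds ! i"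
    using bij_betw_inv_into_right[OF bij_betw_nth_divisors d] assms
    by (simp add: compl_index_def)
qed

lemma compl_index_compl_index: "compl_index (compl_index i) = i"
proof (cases "i < length ds")
  case True
  have "ds ! compl_index (compl_index i) = n div (n div ds ! i)"
    using nth_compl_index[OF compl_index_less[OF True]] nth_compl_index[OF True] by simp
  also have "\<dots> = ds ! i"
    using div_div_eq_right[OF nth_dvd[OF True] dvd_refl] n_pos by simp
  finally show ?thesis
    using compl_index_less[OF compl_index_less[OF True]] True distinct_ds by (simp add: nth_eq_iff_index_eq)
qed (simp add: compl_index_def)

lemma compl_index_permutes: "compl_index permutes {0..<length ds}"
  unfolding permutes_def
proof (intro conjI allI impI)
  show "compl_index i = i" if "i \<notin> {0..<length ds}" for i
    using that by (simp add: compl_index_def)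
  show "\<exists>!i. compl_index i = j" for j
    using compl_index_compl_index by metis
qed

lemma card_fixpoints_compl_index: "card {i\<in>{0..<length ds}. compl_index i = i} \<le> 1"
proof -
  have square: "ds ! i * ds ! i = n" if "i < length ds" "compl_index i = i" for i
    using nth_compl_index[OF that(1)] dvd_mult_div_cancel[OF nth_dvd[OF that(1)]] that(2) by simp
  have "i = j" if "i \<in> {i\<in>{0..<length ds}. compl_index i = i}" "j \<in> {i\<in>{0..<length ds}. compl_index i = i}" for i j
  proof -
    have "ds ! i * ds ! i = ds ! j * ds ! j" using that square by auto
    then have "ds ! i = ds ! j" by (simp flip: power2_eq_square)
    then show ?thesis using that distinct_ds by (simp add: nth_eq_iff_index_eq)
  qed
  then show ?thesis using card_le_Suc0_iff_eq[of "{i\<in>{0..<length ds}. compl_index i = i}"] by auto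
qed

lemma sign_compl_index: "sign compl_index = (-1) ^ (length ds div 2)"
  using sign_involution_card_fixpoints_le_1[OF _ compl_index_permutes compl_index_compl_index
      card_fixpoints_compl_index] by simp

definition ramanujan_matrix :: "complex mat" where
  "ramanujan_matrix = mat (length ds) (length ds) (\<lambda>(i, j). ramanujan_sum (ds ! i) (int (n div ds ! j)))"

definition divisibility_matrix :: "complex mat" where
  "divisibility_matrix = mat (length ds) (length ds) (\<lambda>(i, j). if ds ! j dvd ds ! i then 1 else 0)"

definition divisor_product_matrix :: "complex mat" where
  "divisor_product_matrix =
     mat (length ds) (length ds) (\<lambda>(i, j). if ds ! i * ds ! j dvd n then of_nat (ds ! i) else 0)"

lemma divisibility_matrix_mult_ramanujan_matrix:
  "divisibility_matrix * ramanujan_matrix = divisor_product_matrix"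
proof (rule eq_matI)
  fix i j assume "i < dim_row divisor_product_matrix" "j < dim_col divisor_product_matrix"
  then have i: "i < length ds" and j: "j < length ds" by (auto simp: divisor_product_matrix_def)
  have "bij_betw ((!) ds) {l\<in>{0..<length ds}. ds ! l dvd ds ! i} {e\<in>{d. d dvd n}. e dvd ds ! i}"
    by (rule bij_betw_Collect[OF bij_betw_nth_divisors]) simp
  also have "{e\<in>{d. d dvd n}. e dvd ds ! i} = {e. e dvd ds ! i}"
    using nth_dvd[OF i] by (auto intro: dvd_trans)
  finally have bij: "bij_betw ((!) ds) {l\<in>{0..<length ds}. ds ! l dvd ds ! i} {e. e dvd ds ! i}" .
  have "(divisibility_matrix * ramanujan_matrix) $$ (i, j)
      = (\<Sum>l=0..<length ds. if ds ! l dvd ds ! i then ramanujan_sum (ds ! l) (int (n div ds ! j)) else 0)"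
    using i j by (auto simp: divisibility_matrix_def ramanujan_matrix_def scalar_prod_def intro!: sum.cong)
  also have "\<dots> = (\<Sum>l\<in>{l\<in>{0..<length ds}. ds ! l dvd ds ! i}. ramanujan_sum (ds ! l) (int (n div ds ! j)))"
    by (rule sum.inter_filter[symmetric]) simp
  also have "\<dots> = (\<Sum>e | e dvd ds ! i. ramanujan_sum e (int (n div ds ! j)))"
    by (rule sum.reindex_bij_betw[OF bij])
  also have "\<dots> = (if int (ds ! i) dvd int (n div ds ! j) then of_nat (ds ! i) else 0)"
    using sum_divisors_ramanujan_sum nth_pos[OF i] by simp
  also have "\<dots> = divisor_product_matrix $$ (i, j)"
    using i j nth_pos[OF j] nth_dvd[OF j] by (simp add: divisor_product_matrix_def dvd_div_iff_mult mult.commute)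
  finally show "(divisibility_matrix * ramanujan_matrix) $$ (i, j) = divisor_product_matrix $$ (i, j)" .
qed (simp_all add: divisibility_matrix_def ramanujan_matrix_def divisor_product_matrix_def)

lemma det_divisibility_matrix: "det divisibility_matrix = 1"
proof -
  have "det divisibility_matrix = signof id * (\<Prod>i=0..<length ds. divisibility_matrix $$ (i, id i))"
  proof (rule det_eq_single_permutation_term[OF _ permutes_id, where w = "(!) ds"])
    fix i j assume "i < length ds" "j < length ds" "divisibility_matrix $$ (i, j) \<noteq> 0"
    then show "ds ! j \<le> ds ! id i"
      using nth_pos by (auto simp: divisibility_matrix_def intro: dvd_imp_le split: if_splits)
  next
    show "divisibility_matrix \<in> carrier_mat (length ds) (length ds)" by (simp add: divisibility_matrix_def)
  next
    show "inj_on ((!) ds) {0..<length ds}" using bij_betw_nth_divisors by (rule bij_betw_imp_inj_on)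
  qed
  then show ?thesis by (simp add: divisibility_matrix_def)
qed

lemma det_divisor_product_matrix:
  "det divisor_product_matrix = (-1) ^ (length ds div 2) * of_nat (\<Prod>d | d dvd n. d)"
proof -
  have "det divisor_product_matrix
      = signof compl_index * (\<Prod>i=0..<length ds. divisor_product_matrix $$ (i, compl_index i))"
  proof (rule det_eq_single_permutation_term[OF _ compl_index_permutes, where w = "(!) ds"])
    fix i j assume i: "i < length ds" and j: "j < length ds"
      and "divisor_product_matrix $$ (i, j) \<noteq> 0"
    then have "ds ! j * ds ! i dvd n"
      by (simp add: divisor_product_matrix_def mult.commute split: if_splits)
    then have "ds ! j dvd n div ds ! i"
      using dvd_div_iff_mult[of "ds ! i" n "ds ! j"] nth_pos[OF i] nth_dvd[OF i] by simp
    then show "ds ! j \<le> ds ! compl_index i"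
      using nth_pos[OF compl_index_less[OF i]] by (simp add: nth_compl_index[OF i] dvd_imp_le)
  next
    show "divisor_product_matrix \<in> carrier_mat (length ds) (length ds)" by (simp add: divisor_product_matrix_def)
  next
    show "inj_on ((!) ds) {0..<length ds}" using bij_betw_nth_divisors by (rule bij_betw_imp_inj_on)
  qed
  also have "(\<Prod>i=0..<length ds. divisor_product_matrix $$ (i, compl_index i)) = (\<Prod>i=0..<length ds. of_nat (ds ! i))"
  proof (rule prod.cong[OF refl])
    fix i assume "i \<in> {0..<length ds}"
    then have i: "i < length ds" by simp
    have "ds ! i * ds ! compl_index i = n"
      using nth_compl_index[OF i] dvd_mult_div_cancel[OF nth_dvd[OF i]] by simp
    then show "divisor_product_matrix $$ (i, compl_index i) = of_nat (ds ! i)"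
      using i compl_index_less[OF i] by (simp add: divisor_product_matrix_def)
  qed
  also have "\<dots> = of_nat (\<Prod>d | d dvd n. d)"
    using prod.reindex_bij_betw[OF bij_betw_nth_divisors, of of_nat] by simp
  finally show ?thesis by (simp add: sign_compl_index)
qed

end

theorem mainTheorem2:
  fixes n :: nat and ds :: "nat list"
  assumes "n \<ge> 1"
    and "distinct ds" and "set ds = {d. d dvd n}"
  shows "det (mat (length ds) (length ds)
            (\<lambda>(i, j). ramanujan_sum (ds ! i) (int (n div (ds ! j)))))
         = complex_of_real (sqrt (real n) ^ num_divisors n) *
           (-1) ^ (\<Sum>p\<in>prime_factors n.
                     ((multiplicity p n + 1) div 2) * (num_divisors n div (multiplicity p n + 1)))"
proof -
  interpret divisor_enumeration n ds using assms by unfold_locales simp_all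
  have "divisibility_matrix \<in> carrier_mat (length ds) (length ds)"
    and "ramanujan_matrix \<in> carrier_mat (length ds) (length ds)"
    by (simp_all add: divisibility_matrix_def ramanujan_matrix_def)
  then have "det ramanujan_matrix = det divisor_product_matrix"
    using det_mult det_divisibility_matrix by (metis divisibility_matrix_mult_ramanujan_matrix mult_1)
  also have "\<dots> = (-1) ^ (num_divisors n div 2) * of_real (sqrt (real n) ^ num_divisors n)"
    unfolding det_divisor_product_matrix length_ds_eq_num_divisors prod_divisors_eq_sqrt_power[OF n_pos, symmetric]
    by simp
  finally show ?thesis
    unfolding ramanujan_matrix_def minus_one_power_half_num_divisors[OF n_pos] by simp
qed

end
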